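(* Let $X,Y\in\Sigma^*$ and let $\mathcal{A},\mathcal{A}'$ be alignments of $X$ onto $Y$. If $\mathcal{A}$ and $\mathcal{A}'$, viewed as paths in the alignment graph of $X$ and $Y$, do not contain any common diagonal edge, then $\mathrm{selfed}(X)\le\mathrm{ed}_{\mathcal{A}}(X,Y)+\mathrm{ed}_{\mathcal{A}'}(X,Y)$.
   Context: An alignment of $X$ onto $Y$ is a sequence $(x_t,y_t)_{t=0}^m$ from $(0,0)$ to $(|X|,|Y|)$ with steps $(1,0)$, $(0,1)$ or $(1,1)$; viewed as a path in the grid graph on $[0,|X|]\times[0,|Y|]$, a step $(x,y)\to(x+1,y+1)$ is a diagonal edge. $\mathrm{ed}_{\mathcal{A}}(X,Y)$ is the unweighted cost of $\mathcal{A}$: the number of steps $(1,0)$, $(0,1)$, and diagonal steps $(x,y)\to(x+1,y+1)$ with $X[x]\ne Y[y]$. A self-alignment of $X$ is an alignment of $X$ onto $X$ containing no edge $(x,x)\to(x+1,x+1)$; $\mathrm{selfed}(X)$ is the minimum unweighted cost of a self-alignment. *)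

theory Defs
  imports Main
begin

(* An alignment is represented as the list of its grid points [(x_0,y_0),...,(x_m,y_m)]. *)

definition is_step :: "nat \<times> nat \<Rightarrow> nat \<times> nat \<Rightarrow> bool" where
  "is_step p q \<longleftrightarrow> q = (fst p + 1, snd p) \<or> q = (fst p, snd p + 1) \<or> q = (fst p + 1, snd p + 1)"

definition is_alignment :: "'a list \<Rightarrow> 'a list \<Rightarrow> (nat \<times> nat) list \<Rightarrow> bool" where
  "is_alignment X Y A \<longleftrightarrow> A \<noteq> [] \<and> hd A = (0, 0) \<and> last A = (length X, length Y) \<and>
     (\<forall>t. Suc t < length A \<longrightarrow> is_step (A ! t) (A ! Suc t))"

definition edges :: "(nat \<times> nat) list \<Rightarrow> ((nat \<times> nat) \<times> (nat \<times> nat)) set" where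
  "edges A = {(A ! t, A ! Suc t) | t. Suc t < length A}"

definition diag_edges :: "(nat \<times> nat) list \<Rightarrow> ((nat \<times> nat) \<times> (nat \<times> nat)) set" where
  "diag_edges A = {(p, q) \<in> edges A. q = (fst p + 1, snd p + 1)}"

definition step_cost :: "'a list \<Rightarrow> 'a list \<Rightarrow> nat \<times> nat \<Rightarrow> nat \<times> nat \<Rightarrow> nat" where
  "step_cost X Y p q =
     (if q = (fst p + 1, snd p + 1) then (if X ! fst p \<noteq> Y ! snd p then 1 else 0) else 1)"

definition ed_al :: "(nat \<times> nat) list \<Rightarrow> 'a list \<Rightarrow> 'a list \<Rightarrow> nat" where
  "ed_al A X Y = (\<Sum>t<length A - 1. step_cost X Y (A ! t) (A ! Suc t))"

definition is_self_alignment :: "'a list \<Rightarrow> (nat \<times> nat) list \<Rightarrow> bool" where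
  "is_self_alignment X A \<longleftrightarrow> is_alignment X X A \<and>
     (\<forall>x. ((x, x), (x + 1, x + 1)) \<notin> edges A)"

definition selfed :: "'a list \<Rightarrow> nat" where
  "selfed X = (LEAST c. \<exists>A. is_self_alignment X A \<and> ed_al A X X = c)"

end

theory Submission
  imports Defs
begin

text \<open>Walk along both alignments simultaneously, keeping them in the same row of \<open>Y\<close>: the pair
  of their current columns is a point of the alignment graph of \<open>X\<close> onto itself.  A horizontal
  step of either alignment is copied as a horizontal or vertical step.  When both alignments enter
  the next row, two vertical steps are dropped, a vertical and a diagonal step become one vertical
  or horizontal step, and two diagonal steps become one diagonal step; its cost
  \<open>[X[x] \<noteq> X[x']]\<close> is at most \<open>[X[x] \<noteq> Y[y]] + [X[x'] \<noteq> Y[y]]\<close>, and it lies on the main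
  diagonal only if \<open>x = x'\<close>, i.e. if both alignments use the same diagonal edge.\<close>

definition is_path :: "(nat \<times> nat) list \<Rightarrow> bool" where
  "is_path A \<longleftrightarrow> (\<forall>t. Suc t < length A \<longrightarrow> is_step (A ! t) (A ! Suc t))"

lemma is_path_singleton [simp]: "is_path [p]"
  by (simp add: is_path_def)

lemma is_path_Cons_Cons [simp]: "is_path (p # q # r) \<longleftrightarrow> is_step p q \<and> is_path (q # r)"
  by (auto simp: is_path_def less_Suc_eq_0_disj)

lemma is_alignment_iff_is_path:
  "is_alignment X Y A \<longleftrightarrow> A \<noteq> [] \<and> hd A = (0, 0) \<and> last A = (length X, length Y) \<and> is_path A"
  by (simp add: is_alignment_def is_path_def)

lemma is_step_iff_horizontal_or_rise:
  "is_step p q \<longleftrightarrow> q = (fst p + 1, snd p) \<or> (\<exists>d \<le> 1. q = (fst p + d, snd p + 1))"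
  by (auto simp: is_step_def le_Suc_eq)

lemma is_path_snd_mono: "is_path P \<Longrightarrow> P \<noteq> [] \<Longrightarrow> snd (hd P) \<le> snd (last P)"
  by (induction P rule: induct_list012) (auto simp: is_step_def)

lemma is_path_Cons_rise_snd_less:
  assumes "is_path (p # q # r)" and "q \<noteq> (fst p + 1, snd p)"
  shows "snd p < snd (last (q # r))"
  using assms is_path_snd_mono[of "q # r"] by (auto simp: is_step_def)

lemma edges_singleton [simp]: "edges [p] = {}"
  by (simp add: edges_def)

lemma edges_eq_image: "edges A = (\<lambda>t. (A ! t, A ! Suc t)) ` {..< length A - 1}"
  by (auto simp: edges_def)

lemma edges_Cons_Cons [simp]: "edges (p # q # r) = insert (p, q) (edges (q # r))"
  by (simp add: edges_eq_image lessThan_Suc_eq_insert_0 image_image)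

lemma diag_edges_Cons_Cons:
  "diag_edges (p # q # r) = (if q = (fst p + 1, snd p + 1) then {(p, q)} else {}) \<union> diag_edges (q # r)"
  by (auto simp: diag_edges_def)

lemma ed_al_singleton [simp]: "ed_al [p] X Y = 0"
  by (simp add: ed_al_def)

lemma ed_al_Cons_Cons [simp]: "ed_al (p # q # r) X Y = step_cost X Y p q + ed_al (q # r) X Y"
  by (simp add: ed_al_def sum.lessThan_Suc_shift del: sum.lessThan_Suc)

lemma step_cost_diag_triangle:
  "step_cost X X (x, x') (x + 1, x' + 1) \<le> step_cost X Y (x, y) (x + 1, y + 1) + step_cost X Y (x', y) (x' + 1, y + 1)"
  by (simp add: step_cost_def)

inductive self_path :: "'a list \<Rightarrow> nat \<times> nat \<Rightarrow> nat \<times> nat \<Rightarrow> nat \<Rightarrow> bool" for X :: "'a list" where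
  stop: "self_path X s s 0"
| step: "is_step s u \<Longrightarrow> (u = (fst s + 1, snd s + 1) \<longrightarrow> fst s \<noteq> snd s) \<Longrightarrow> self_path X u t c \<Longrightarrow>
    self_path X s t (step_cost X X s u + c)"

lemma self_path_imp_path:
  assumes "self_path X s t c"
  shows "\<exists>Q. is_path Q \<and> Q \<noteq> [] \<and> hd Q = s \<and> last Q = t \<and>
    (\<forall>x. ((x, x), (x + 1, x + 1)) \<notin> edges Q) \<and> ed_al Q X X = c"
  using assms
proof (induction rule: self_path.induct)
  case (stop s)
  show ?case by (intro exI[of _ "[s]"]) simp
next
  case (step s u t c)
  then obtain Q where Q: "is_path Q" "Q \<noteq> []" "hd Q = u" "last Q = t"
    "\<forall>x. ((x, x), (x + 1, x + 1)) \<notin> edges Q" "ed_al Q X X = c" by blast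
  then obtain r where "Q = u # r" by (cases Q) auto
  with Q step.hyps(1,2) show ?case by (intro exI[of _ "s # Q"]) auto
qed

lemma selfed_le_self_path:
  assumes "self_path X (0, 0) (length X, length X) c"
  shows "selfed X \<le> c"
proof -
  obtain Q where "is_self_alignment X Q" "ed_al Q X X = c"
    using self_path_imp_path[OF assms] by (auto simp: is_self_alignment_def is_alignment_iff_is_path)
  then show ?thesis unfolding selfed_def by (intro Least_le) blast
qed

lemma self_path_Cons_horizontal:
  assumes "q = (fst p + 1, snd p)" and "self_path X (fst q, x') t c"
  shows "self_path X (fst p, x') t (step_cost X Y p q + c)"
proof -
  have "self_path X (fst p, x') t (step_cost X X (fst p, x') (fst q, x') + c)"
    using assms by (intro self_path.step) (auto simp: is_step_def)
  then show ?thesis using assms(1) by (simp add: step_cost_def)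
qed

lemma self_path_Cons_horizontal':
  assumes "q' = (fst p' + 1, snd p')" and "self_path X (x, fst q') t c"
  shows "self_path X (x, fst p') t (step_cost X Y p' q' + c)"
proof -
  have "self_path X (x, fst p') t (step_cost X X (x, fst p') (x, fst q') + c)"
    using assms by (intro self_path.step) (auto simp: is_step_def)
  then show ?thesis using assms(1) by (simp add: step_cost_def)
qed

lemma self_path_Cons_rise:
  fixes d d' :: nat
  assumes q: "q = (fst p + d, snd p + 1)" and q': "q' = (fst p' + d', snd p' + 1)"
    and row: "snd p = snd p'" and "d \<le> 1" "d' \<le> 1" and diag: "d = 1 \<Longrightarrow> d' = 1 \<Longrightarrow> fst p \<noteq> fst p'"
    and path: "self_path X (fst q, fst q') t c"
  shows "\<exists>c0 \<le> step_cost X Y p q + step_cost X Y p' q' + c. self_path X (fst p, fst p') t c0"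
proof (cases "d = 0 \<and> d' = 0")
  case True
  then show ?thesis using path q q' by (intro exI[of _ c]) simp
next
  case moves: False
  have d: "d = 0 \<or> d = 1" "d' = 0 \<or> d' = 1" using \<open>d \<le> 1\<close> \<open>d' \<le> 1\<close> by auto
  let ?s = "(fst p, fst p')" and ?u = "(fst q, fst q')"
  have "self_path X ?s t (step_cost X X ?s ?u + c)"
    using path q q' d moves diag by (intro self_path.step) (auto simp: is_step_def)
  moreover have "step_cost X X ?s ?u \<le> step_cost X Y p q + step_cost X Y p' q'"
  proof (cases "d = 1 \<and> d' = 1")
    case True
    obtain x x' y where "p = (x, y)" "p' = (x', y)" using row by (cases p, cases p') auto
    then show ?thesis using True q q' step_cost_diag_triangle[of X x x' Y y] by simp
  next
    case False
    then show ?thesis using q q' d by (auto simp: step_cost_def)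
  qed
  ultimately show ?thesis by (intro exI[of _ "step_cost X X ?s ?u + c"]) simp
qed

lemma paths_first_steps_cases:
  assumes "is_path P" "is_path P'" "P \<noteq> []" "P' \<noteq> []"
    and "snd (hd P) = snd (hd P')" "snd (last P) = snd (last P')"
  obtains (horizontal) p q r where "P = p # q # r" "q = (fst p + 1, snd p)"
  | (horizontal') p' q' r' where "P' = p' # q' # r'" "q' = (fst p' + 1, snd p')"
  | (rise) p q r d p' q' r' d' where "P = p # q # r" "P' = p' # q' # r'"
      "q = (fst p + d, snd p + 1)" "q' = (fst p' + d', snd p' + 1)" "snd p = snd p'" "d \<le> 1" "d' \<le> 1"
  | (final) p p' where "P = [p]" "P' = [p']"
proof -
  obtain p s where P: "P = p # s" using assms(3) by (cases P) auto
  obtain p' s' where P': "P' = p' # s'" using assms(4) by (cases P') auto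
  show thesis
  proof (cases "\<exists>q r. s = q # r \<and> q = (fst p + 1, snd p)")
    case True
    then show thesis using horizontal P by blast
  next
    case no_horizontal: False
    show thesis
    proof (cases "\<exists>q' r'. s' = q' # r' \<and> q' = (fst p' + 1, snd p')")
      case True
      then show thesis using horizontal' P' by blast
    next
      case no_horizontal': False
      show thesis
      proof (cases s; cases s')
        fix q r q' r'
        assume s: "s = q # r" and s': "s' = q' # r'"
        obtain d where "q = (fst p + d, snd p + 1)" "d \<le> 1"
          using assms(1) P s no_horizontal by (auto simp: is_step_iff_horizontal_or_rise)
        moreover obtain d' where "q' = (fst p' + d', snd p' + 1)" "d' \<le> 1"
          using assms(2) P' s' no_horizontal' by (auto simp: is_step_iff_horizontal_or_rise)
        moreover have "snd p = snd p'" using assms(5) P P' by simp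
        ultimately show thesis using rise P P' s s' by blast
      next
        fix q' r'
        assume "s = []" "s' = q' # r'"
        then have "snd p' < snd (last P')"
          using is_path_Cons_rise_snd_less[of p' q' r'] assms(2) P' no_horizontal' by auto
        with \<open>s = []\<close> show thesis using assms(5,6) P P' by simp
      next
        fix q r
        assume "s = q # r" "s' = []"
        then have "snd p < snd (last P)"
          using is_path_Cons_rise_snd_less[of p q r] assms(1) P no_horizontal by auto
        with \<open>s' = []\<close> show thesis using assms(5,6) P P' by simp
      qed (use P P' final in auto)
    qed
  qed
qed

lemma self_path_of_diag_disjoint_paths:
  assumes "is_path P" "is_path P'" "P \<noteq> []" "P' \<noteq> []"
    and "snd (hd P) = snd (hd P')" "snd (last P) = snd (last P')"
    and "diag_edges P \<inter> diag_edges P' = {}"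
  shows "\<exists>c \<le> ed_al P X Y + ed_al P' X Y.
    self_path X (fst (hd P), fst (hd P')) (fst (last P), fst (last P')) c"
  using assms
proof (induction "length P + length P'" arbitrary: P P' rule: less_induct)
  case less
  from less.prems show ?case
  proof (cases rule: paths_first_steps_cases)
    case (horizontal p q r)
    have "\<exists>c \<le> ed_al (q # r) X Y + ed_al P' X Y.
        self_path X (fst (hd (q # r)), fst (hd P')) (fst (last (q # r)), fst (last P')) c"
      using less.prems horizontal by (intro less.hyps) (auto simp: diag_edges_Cons_Cons)
    then obtain c where c: "c \<le> ed_al (q # r) X Y + ed_al P' X Y"
        "self_path X (fst q, fst (hd P')) (fst (last P), fst (last P')) c"
      using horizontal by auto
    show ?thesis
      using self_path_Cons_horizontal[OF horizontal(2) c(2)] c(1) horizontal(1)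
      by (intro exI[of _ "step_cost X Y p q + c"]) simp
  next
    case (horizontal' p' q' r')
    have "\<exists>c \<le> ed_al P X Y + ed_al (q' # r') X Y.
        self_path X (fst (hd P), fst (hd (q' # r'))) (fst (last P), fst (last (q' # r'))) c"
      using less.prems horizontal' by (intro less.hyps) (auto simp: diag_edges_Cons_Cons)
    then obtain c where c: "c \<le> ed_al P X Y + ed_al (q' # r') X Y"
        "self_path X (fst (hd P), fst q') (fst (last P), fst (last P')) c"
      using horizontal' by auto
    show ?thesis
      using self_path_Cons_horizontal'[OF horizontal'(2) c(2)] c(1) horizontal'(1)
      by (intro exI[of _ "step_cost X Y p' q' + c"]) simp
  next
    case (rise p q r d p' q' r' d')
    have off_main_diagonal: "fst p \<noteq> fst p'" if "d = 1" "d' = 1"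
    proof
      assume "fst p = fst p'"
      then have "(p, q) \<in> diag_edges P \<inter> diag_edges P'"
        using rise that less.prems(5) by (auto simp: diag_edges_Cons_Cons prod_eq_iff)
      with less.prems(7) show False by blast
    qed
    have "\<exists>c \<le> ed_al (q # r) X Y + ed_al (q' # r') X Y.
        self_path X (fst (hd (q # r)), fst (hd (q' # r'))) (fst (last (q # r)), fst (last (q' # r'))) c"
      using less.prems rise by (intro less.hyps) (auto simp: diag_edges_Cons_Cons)
    then obtain c where c: "c \<le> ed_al (q # r) X Y + ed_al (q' # r') X Y"
        "self_path X (fst q, fst q') (fst (last P), fst (last P')) c"
      using rise by auto
    obtain c0 where "c0 \<le> step_cost X Y p q + step_cost X Y p' q' + c"
        "self_path X (fst p, fst p') (fst (last P), fst (last P')) c0"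
      using self_path_Cons_rise[OF rise(3-7) off_main_diagonal c(2)] by blast
    with c(1) rise(1,2) show ?thesis by (intro exI[of _ c0]) simp
  next
    case (final p p')
    then show ?thesis by (intro exI[of _ 0]) (simp add: self_path.stop)
  qed
qed

theorem lemma4p3:
  fixes X Y :: "'a list" and A A' :: "(nat \<times> nat) list"
  assumes "is_alignment X Y A" and "is_alignment X Y A'"
    and "diag_edges A \<inter> diag_edges A' = {}"
  shows "selfed X \<le> ed_al A X Y + ed_al A' X Y"
proof -
  obtain c where "c \<le> ed_al A X Y + ed_al A' X Y" "self_path X (0, 0) (length X, length X) c"
    using self_path_of_diag_disjoint_paths[of A A' X Y] assms
    by (auto simp: is_alignment_iff_is_path)
  then show ?thesis using selfed_le_self_path by fastforce
qed

end
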